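(* Fix integers $\ell\ge 3$ and $p_1,\dots,p_\ell\ge1$, and let $P_\ell=(p_1,\dots,p_\ell)$. For each $n$, with $A_p$ and $B_{P_\ell}$ as defined in the context, $$|B_{P_\ell}|=o\big(n^{\frac{p_1+p_2+\cdots+p_\ell-\ell}{2}}\big)\quad\text{as } n\to\infty.$$
   Context: For a positive integer $n$ and $p\ge1$, $A_p$ is the collection of vectors $J=(j_1,\dots,j_p)$ with $1\le j_1,\dots,j_p\le n/2$ for which there exist signs $\epsilon_i\in\{+1,-1\}$ with $\sum_{i=1}^p\epsilon_i j_i\equiv 0\pmod n$, counted with multiplicity (i.e. once for each admissible choice of signs). For $J=(j_1,\dots,j_p)$, $S_J$ is the multiset $\{j_1,\dots,j_p\}$. Two vectors $J,J'$ are connected if $S_J\cap S_{J'}\neq\emptyset$. A set of vectors $\{J_1,\dots,J_\ell\}$ forms a cluster if for any two of its members there is a chain of members of the set starting at one and ending at the other in which consecutive vectors are connected (i.e. the graph on $\{J_1,\dots,J_\ell\}$ with edges between connected vectors is connected). $B_{P_\ell}$ is the set of $(J_1,\dots,J_\ell)\in A_{p_1}\times\cdots\times A_{p_\ell}$ such that $\{J_1,\dots,J_\ell\}$ forms a cluster and every element of $\bigcup_{i=1}^\ell S_{J_i}$ has multiplicity at least two (in the combined multiset). *)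

theory Defs
  imports Main "HOL-Library.Multiset" "HOL-Library.Landau_Symbols"
begin

text \<open>Elements of A_p, counted with multiplicity: a pair (J, signs) where J is the
vector (j_1,...,j_p) with 1 <= j_i <= n/2 and signs is an admissible sign choice
with sum_i eps_i j_i = 0 mod n.\<close>
definition A_set :: "nat \<Rightarrow> nat \<Rightarrow> (nat list \<times> int list) set" where
  "A_set n p = {(J, e). length J = p \<and> length e = p
      \<and> (\<forall>j\<in>set J. 1 \<le> j \<and> 2 * j \<le> n)
      \<and> set e \<subseteq> {1, -1}
      \<and> (\<Sum>i<p. e ! i * int (J ! i)) mod int n = 0}"

definition is_cluster :: "nat list list \<Rightarrow> bool" where
  "is_cluster Js = (\<forall>a < length Js. \<forall>b < length Js.
      (a, b) \<in> {(i, k). i < length Js \<and> k < length Js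
                  \<and> set (Js ! i) \<inter> set (Js ! k) \<noteq> {}}\<^sup>*)"

definition B_set :: "nat \<Rightarrow> nat list \<Rightarrow> (nat list \<times> int list) list set" where
  "B_set n P = {Xs. length Xs = length P
      \<and> (\<forall>i < length P. Xs ! i \<in> A_set n (P ! i))
      \<and> is_cluster (map fst Xs)
      \<and> (\<forall>x \<in> (\<Union>i<length P. set (fst (Xs ! i))).
            2 \<le> count (\<Sum>i<length P. mset (fst (Xs ! i))) x)}"

end

theory Submission
  imports Defs "HOL-Library.FuncSet"
begin

text \<open>
  Encode a cluster \<open>X\<close> by its shape: the signs, the pattern of equalities among the entries
  and the number \<open>k\<close> of distinct entries. Only finitely many shapes occur, independently of
  \<open>n\<close>, and within one shape \<open>X\<close> is determined by its \<open>k\<close> distinct entries, which satisfy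
  one congruence modulo \<open>n\<close> per vector. If the vectors admit \<open>s\<close> triangular pivots, solving
  the pivot congruences one column at a time leaves at most \<open>(2N)\<^sup>s (n/2)\<^sup>k\<^sup>-\<^sup>s\<close>
  choices, where \<open>N = p\<^sub>1 + ... + p\<^sub>L\<close>.

  The combinatorial core is \<open>2k + L + 1 \<le> N + 2s\<close>, which bounds the exponent by
  \<open>(N - L - 1)/2\<close>. It is proved by deleting vectors one at a time: a vector owning a private
  value (no other remaining vector has a nonzero coefficient on it) becomes a pivot, and
  otherwise the deletion lowers the potential \<open>total_excess\<close> or creates a private value.
  Since every value occurs at least twice, the potential is at most \<open>N - 2k\<close>. The last unit
  comes from slack in that estimate or from a good first deletion; if neither exists, every
  vector is paired with another one such that no value occurring in the pair occurs elsewhere,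
  which contradicts connectivity of the cluster when \<open>L \<ge> 3\<close>.
\<close>

section \<open>Triangular systems of congruences\<close>

primrec triangular :: "('r \<Rightarrow> 'c \<Rightarrow> int) \<Rightarrow> ('r \<times> 'c) list \<Rightarrow> bool" where
  "triangular C [] \<longleftrightarrow> True"
| "triangular C (p # ps) \<longleftrightarrow>
     C (fst p) (snd p) \<noteq> 0 \<and> (\<forall>q\<in>set ps. C (fst q) (snd p) = 0) \<and> triangular C ps"

lemma triangular_diag_nonzero: "triangular C ps \<Longrightarrow> q \<in> set ps \<Longrightarrow> C (fst q) (snd q) \<noteq> 0"
  by (induction ps) auto

lemma triangular_distinct_columns: "triangular C ps \<Longrightarrow> distinct (map snd ps)"
proof (induction ps)
  case (Cons p ps)
  have "snd q \<noteq> snd p" if "q \<in> set ps" for q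
  proof
    assume "snd q = snd p"
    then have "C (fst q) (snd q) = 0" using Cons.prems that by simp
    then show False using triangular_diag_nonzero[of C ps q] Cons.prems that by simp
  qed
  then have "snd p \<notin> snd ` set ps" by (metis imageE)
  with Cons show ?case by simp
qed simp

definition congruence_solutions ::
    "'c set \<Rightarrow> ('r \<Rightarrow> 'c \<Rightarrow> int) \<Rightarrow> 'r set \<Rightarrow> nat \<Rightarrow> nat \<Rightarrow> ('c \<Rightarrow> nat) set" where
  "congruence_solutions A C R h n =
     {g \<in> A \<rightarrow>\<^sub>E {1..h}. \<forall>r\<in>R. int n dvd (\<Sum>a\<in>A. C r a * int (g a))}"

lemma finite_congruence_solutions:
  assumes "finite A"
  shows "finite (congruence_solutions A C R h n)"
proof -
  have "finite (A \<rightarrow>\<^sub>E {1..h})" using assms by (intro finite_PiE) auto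
  then show ?thesis unfolding congruence_solutions_def by (rule finite_subset[OF Collect_restrict])
qed

lemma card_linear_congruence_le:
  fixes c s :: int
  assumes "c \<noteq> 0" and "0 < n" and "h \<le> n"
  shows "card {x \<in> {1..h}. int n dvd c * int x + s} \<le> 2 * nat \<bar>c\<bar>"
proof -
  define T where "T = {x \<in> {1..h}. int n dvd c * int x + s}"
  have "card T \<le> 2 * nat \<bar>c\<bar>"
  proof (cases "T = {}")
    case False
    then obtain x0 where x0: "x0 \<in> T" by blast
    define q where "q x = (c * (int x - int x0)) div int n" for x
    have q: "c * (int x - int x0) = int n * q x" if "x \<in> T" for x
    proof -
      have "int n dvd (c * int x + s) - (c * int x0 + s)"
        using that x0 unfolding T_def by (intro dvd_diff) auto
      then show ?thesis unfolding q_def by (simp add: right_diff_distrib)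
    qed
    have "inj_on q T"
    proof
      fix x y assume "x \<in> T" "y \<in> T" "q x = q y"
      then have "c * (int x - int x0) = c * (int y - int x0)" using q by simp
      then show "x = y" using assms(1) by simp
    qed
    moreover have "q ` T \<subseteq> {-(\<bar>c\<bar> - 1)..\<bar>c\<bar> - 1}"
    proof
      fix y assume "y \<in> q ` T"
      then obtain x where x: "x \<in> T" "y = q x" by blast
      have "\<bar>int x - int x0\<bar> < int n" using x(1) x0 assms(3) unfolding T_def by auto
      then have "\<bar>c * (int x - int x0)\<bar> < \<bar>c\<bar> * int n"
        using assms(1) by (simp add: abs_mult)
      then have "int n * \<bar>y\<bar> < int n * \<bar>c\<bar>"
        using q[OF x(1)] x(2) by (simp add: abs_mult mult.commute)
      then have "\<bar>y\<bar> < \<bar>c\<bar>" using assms(2) by (simp add: mult_less_cancel_left_pos)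
      then show "y \<in> {-(\<bar>c\<bar> - 1)..\<bar>c\<bar> - 1}" by auto
    qed
    ultimately have "card T \<le> card {-(\<bar>c\<bar> - 1)..\<bar>c\<bar> - 1}" by (intro card_inj_on_le) auto
    then show ?thesis by simp
  qed simp
  then show ?thesis by (simp add: T_def)
qed

text \<open>Once the coordinates off column \<open>b\<close> are fixed, the congruence of row \<open>r\<close> leaves at
  most \<open>2 \<bar>C r b\<bar>\<close> values for \<open>g b\<close>, and the rows \<open>R\<close> do not involve \<open>b\<close>.\<close>

lemma card_congruence_solutions_pivot_step:
  assumes "finite A" "b \<in> A" "C r b \<noteq> 0" "nat \<bar>C r b\<bar> \<le> M"
    and zero: "\<And>r'. r' \<in> R \<Longrightarrow> C r' b = 0" and "0 < n" "h \<le> n"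
  shows "card (congruence_solutions A C (insert r R) h n)
           \<le> 2 * M * card (congruence_solutions (A - {b}) C R h n)"
proof -
  define A' where "A' = A - {b}"
  let ?G = "congruence_solutions A C (insert r R) h n"
  let ?G' = "congruence_solutions A' C R h n"
  let ?choices = "\<lambda>g'. {x \<in> {1..h}. int n dvd C r b * int x + (\<Sum>a\<in>A'. C r a * int (g' a))}"
  have split: "(\<Sum>a\<in>A. C r' a * int (g a)) = C r' b * int (g b) + (\<Sum>a\<in>A'. C r' a * int (g a))"
    for r' g using assms(1,2) unfolding A'_def by (rule sum.remove)
  have "(\<lambda>g. (restrict g A', g b)) ` ?G \<subseteq> Sigma ?G' ?choices"
  proof (rule image_subsetI)
    fix g assume g: "g \<in> ?G"
    have "restrict g A' \<in> ?G'"
      using g zero split unfolding congruence_solutions_def A'_def by (auto simp: PiE_iff)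
    moreover have "g b \<in> ?choices (restrict g A')"
      using g assms(2) split[of r g] unfolding congruence_solutions_def by (auto cong: sum.cong)
    ultimately show "(restrict g A', g b) \<in> Sigma ?G' ?choices" by simp
  qed
  moreover have "inj_on (\<lambda>g. (restrict g A', g b)) ?G"
  proof (rule inj_onI)
    fix g1 g2 assume "g1 \<in> ?G" "g2 \<in> ?G" and eq: "(restrict g1 A', g1 b) = (restrict g2 A', g2 b)"
    then have "g1 \<in> A \<rightarrow>\<^sub>E {1..h}" "g2 \<in> A \<rightarrow>\<^sub>E {1..h}" by (auto simp: congruence_solutions_def)
    then show "g1 = g2"
    proof (rule PiE_ext)
      fix a assume "a \<in> A"
      show "g1 a = g2 a"
      proof (cases "a = b")
        case False
        then have "restrict g1 A' a = restrict g2 A' a" using eq by simp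
        then show ?thesis using \<open>a \<in> A\<close> False by (simp add: A'_def)
      qed (use eq in simp)
    qed
  qed
  ultimately have "card ?G \<le> card (Sigma ?G' ?choices)"
    using assms(1) by (intro card_inj_on_le) (auto simp: A'_def finite_congruence_solutions)
  also have "\<dots> = (\<Sum>g'\<in>?G'. card (?choices g'))"
    using assms(1) by (simp add: A'_def finite_congruence_solutions)
  also have "\<dots> \<le> (\<Sum>g'\<in>?G'. 2 * M)"
  proof (rule sum_mono)
    fix g'
    have "card (?choices g') \<le> 2 * nat \<bar>C r b\<bar>"
      by (rule card_linear_congruence_le[OF assms(3,6,7)])
    then show "card (?choices g') \<le> 2 * M" using assms(4) by linarith
  qed
  finally show ?thesis by (simp add: A'_def mult.commute)
qed

lemma card_congruence_solutions_triangular: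
  assumes "finite A" "triangular C piv" "snd ` set piv \<subseteq> A"
    and "\<And>p. p \<in> set piv \<Longrightarrow> \<bar>C (fst p) (snd p)\<bar> \<le> int M"
    and "0 < n" "h \<le> n"
  shows "card (congruence_solutions A C (fst ` set piv) h n)
           \<le> (2 * M) ^ length piv * h ^ (card A - length piv)"
  using assms(1-4)
proof (induction piv arbitrary: A)
  case Nil
  then show ?case by (simp add: congruence_solutions_def card_PiE)
next
  case (Cons p piv)
  obtain r b where p: "p = (r, b)" by fastforce
  have b: "b \<in> A" "C r b \<noteq> 0" "nat \<bar>C r b\<bar> \<le> M" "\<And>r'. r' \<in> fst ` set piv \<Longrightarrow> C r' b = 0"
    using Cons.prems p by (auto simp: nat_le_iff)
  have "b \<notin> snd ` set piv" using triangular_distinct_columns[OF Cons.prems(2)] p by auto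
  then have IH: "card (congruence_solutions (A - {b}) C (fst ` set piv) h n)
                   \<le> (2 * M) ^ length piv * h ^ (card (A - {b}) - length piv)"
    using Cons.prems by (intro Cons.IH) auto
  have "card (congruence_solutions A C (fst ` set (p # piv)) h n)
          \<le> 2 * M * card (congruence_solutions (A - {b}) C (fst ` set piv) h n)"
    using card_congruence_solutions_pivot_step[of A b C r M "fst ` set piv", OF Cons.prems(1) b assms(5,6)] p
    by simp
  also have "\<dots> \<le> (2 * M) ^ length (p # piv) * h ^ (card A - length (p # piv))"
    using IH Cons.prems(1) b(1) by (simp add: mult.assoc)
  finally show ?case .
qed

section \<open>Signed incidence patterns\<close>

text \<open>Rows \<open>i < L\<close> stand for the vectors \<open>J\<^sub>i\<close> and columns for the values occurring in
  them: \<open>occ i b\<close> is the multiplicity of \<open>b\<close> in \<open>J\<^sub>i\<close> and \<open>coef i b\<close> its signed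
  multiplicity, the coefficient of \<open>b\<close> in the congruence of \<open>J\<^sub>i\<close>.\<close>

locale signed_incidence =
  fixes L :: nat and occ :: "nat \<Rightarrow> 'b \<Rightarrow> nat" and coef :: "nat \<Rightarrow> 'b \<Rightarrow> int" and K :: "'b set"
  assumes finite_K: "finite K"
    and occ_in_K: "\<And>i b. i < L \<Longrightarrow> 0 < occ i b \<Longrightarrow> b \<in> K"
    and abs_coef_le_occ: "\<And>i b. i < L \<Longrightarrow> \<bar>coef i b\<bar> \<le> int (occ i b)"
    and even_occ_minus_coef: "\<And>i b. i < L \<Longrightarrow> even (int (occ i b) - coef i b)"
begin

definition deg :: "nat set \<Rightarrow> 'b \<Rightarrow> nat" where
  "deg W b = card {i \<in> W. coef i b \<noteq> 0}"

definition has_private_column :: "nat set \<Rightarrow> nat \<Rightarrow> bool" where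
  "has_private_column W i \<longleftrightarrow> i \<in> W \<and> (\<exists>b. coef i b \<noteq> 0 \<and> deg W b = 1)"

definition n_private :: "nat set \<Rightarrow> nat" where
  "n_private W = card {i \<in> W. has_private_column W i}"

definition occurrences :: "'b \<Rightarrow> nat" where
  "occurrences b = (\<Sum>i<L. occ i b)"

definition total_occurrences :: nat where
  "total_occurrences = (\<Sum>b\<in>K. occurrences b)"

definition self_cancelling :: "'b \<Rightarrow> bool" where
  "self_cancelling b \<longleftrightarrow> occurrences b = 2 \<and> (\<exists>i<L. occ i b = 2 \<and> coef i b = 0)"

text \<open>A self-cancelling column has only two occurrences but a zero row; exempting it keeps
  \<open>excess_le_occurrences\<close> true.\<close>

definition zero_rows :: "nat set \<Rightarrow> 'b \<Rightarrow> nat" where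
  "zero_rows W b =
     (if self_cancelling b then 0 else card {i \<in> W. 0 < occ i b \<and> coef i b = 0})"

definition excess :: "nat set \<Rightarrow> 'b \<Rightarrow> nat" where
  "excess W b = (deg W b - 2) + zero_rows W b"

definition total_excess :: "nat set \<Rightarrow> nat" where
  "total_excess W = (\<Sum>b\<in>K. excess W b)"

definition adjacent :: "(nat \<times> nat) set" where
  "adjacent = {(i, j). i < L \<and> j < L \<and> (\<exists>b. 0 < occ i b \<and> 0 < occ j b)}"

lemma coef_nonzero_imp_occ: "i < L \<Longrightarrow> coef i b \<noteq> 0 \<Longrightarrow> 0 < occ i b"
  using abs_coef_le_occ[of i b] by fastforce

lemma coef_nonzero_imp_in_K: "i < L \<Longrightarrow> coef i b \<noteq> 0 \<Longrightarrow> b \<in> K"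
  using coef_nonzero_imp_occ occ_in_K by blast

lemma zero_coef_occ_ge_2: "i < L \<Longrightarrow> 0 < occ i b \<Longrightarrow> coef i b = 0 \<Longrightarrow> 2 \<le> occ i b"
  using even_occ_minus_coef[of i b] by (cases "occ i b = 1") auto

lemma occ_le_occurrences: "i < L \<Longrightarrow> occ i b \<le> occurrences b"
  unfolding occurrences_def by (rule member_le_sum) auto

lemma self_cancelling_single_row:
  assumes "self_cancelling b" "i < L" "j < L" "0 < occ i b" "0 < occ j b"
  shows "i = j"
proof -
  obtain i0 where i0: "i0 < L" "occ i0 b = 2" and m: "occurrences b = 2"
    using assms(1) by (auto simp: self_cancelling_def)
  have unique: "x = i0" if "x < L" "0 < occ x b" for x
  proof (rule ccontr)
    assume "x \<noteq> i0"
    then have "occ i0 b + occ x b = (\<Sum>y\<in>{i0, x}. occ y b)" by simp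
    also have "\<dots> \<le> occurrences b" unfolding occurrences_def by (rule sum_mono2) (use i0 that in auto)
    finally show False using m i0 that by simp
  qed
  show ?thesis using unique[OF assms(2,4)] unique[OF assms(3,5)] by simp
qed

lemma self_cancelling_coef:
  assumes "self_cancelling b" "i < L"
  shows "coef i b = 0"
proof (rule ccontr)
  assume nz: "coef i b \<noteq> 0"
  obtain i0 where i0: "i0 < L" "occ i0 b = 2" "coef i0 b = 0"
    using assms(1) by (auto simp: self_cancelling_def)
  have "i = i0" using self_cancelling_single_row[OF assms i0(1) coef_nonzero_imp_occ[OF assms(2) nz]] i0(2)
    by simp
  then show False using nz i0(3) by simp
qed

lemma deg_mono: "W' \<subseteq> W \<Longrightarrow> finite W \<Longrightarrow> deg W' b \<le> deg W b"
  unfolding deg_def by (rule card_mono) auto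

lemma zero_rows_mono: "W' \<subseteq> W \<Longrightarrow> finite W \<Longrightarrow> zero_rows W' b \<le> zero_rows W b"
  unfolding zero_rows_def by (auto intro!: card_mono)

lemma excess_mono: "W' \<subseteq> W \<Longrightarrow> finite W \<Longrightarrow> excess W' b \<le> excess W b"
  unfolding excess_def using deg_mono[of W' W b] zero_rows_mono[of W' W b] by linarith

lemma total_excess_mono: "W' \<subseteq> W \<Longrightarrow> finite W \<Longrightarrow> total_excess W' \<le> total_excess W"
  unfolding total_excess_def by (intro sum_mono excess_mono)

lemma total_excess_drop:
  assumes "W' \<subseteq> W" "finite W" "D \<subseteq> K" "\<And>b. b \<in> D \<Longrightarrow> excess W' b < excess W b"
  shows "total_excess W' + card D \<le> total_excess W"
proof -
  have "finite D" using assms(3) finite_K finite_subset by blast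
  then have "total_excess W' + card D = (\<Sum>b\<in>K. excess W' b + (if b \<in> D then 1 else 0))"
    unfolding total_excess_def using assms(3) finite_K
    by (simp add: sum.distrib sum.If_cases Int_absorb1)
  also have "\<dots> \<le> total_excess W" unfolding total_excess_def
    using assms(4) excess_mono[OF assms(1,2)] by (intro sum_mono) (auto simp: Suc_le_eq)
  finally show ?thesis .
qed

lemma deg_pos:
  assumes "finite W" "i \<in> W" "coef i b \<noteq> 0"
  shows "1 \<le> deg W b"
proof -
  have "{i \<in> W. coef i b \<noteq> 0} \<noteq> {}" using assms by auto
  then show ?thesis unfolding deg_def using assms(1) by (simp add: Suc_le_eq card_gt_0_iff)
qed

lemma deg_remove:
  assumes "finite W" "r \<in> W" "coef r b \<noteq> 0"
  shows "deg (W - {r}) b = deg W b - 1"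
proof -
  have "{i \<in> W - {r}. coef i b \<noteq> 0} = {i \<in> W. coef i b \<noteq> 0} - {r}" by auto
  then show ?thesis unfolding deg_def using assms by (simp add: card_Diff_singleton)
qed

lemma deg_one_unique:
  assumes "deg W b = 1" "i \<in> W" "coef i b \<noteq> 0" "j \<in> W" "coef j b \<noteq> 0"
  shows "i = j"
proof -
  obtain x where "{i \<in> W. coef i b \<noteq> 0} = {x}"
    using assms(1) unfolding deg_def by (rule card_1_singletonE)
  moreover have "i \<in> {i \<in> W. coef i b \<noteq> 0}" "j \<in> {i \<in> W. coef i b \<noteq> 0}"
    using assms(2-5) by auto
  ultimately show ?thesis by simp
qed

lemma excess_remove_less_deg:
  assumes "finite W" "r \<in> W" "coef r b \<noteq> 0" "3 \<le> deg W b"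
  shows "excess (W - {r}) b < excess W b"
proof -
  have "zero_rows (W - {r}) b \<le> zero_rows W b" using zero_rows_mono[of "W - {r}" W b] assms(1) by simp
  then show ?thesis using deg_remove[OF assms(1-3)] assms(4) unfolding excess_def by linarith
qed

lemma excess_remove_less_zero_row:
  assumes "finite W" "r \<in> W" "0 < occ r b" "coef r b = 0" "\<not> self_cancelling b"
  shows "excess (W - {r}) b < excess W b"
proof -
  have "{i \<in> W - {r}. 0 < occ i b \<and> coef i b = 0} \<subset> {i \<in> W. 0 < occ i b \<and> coef i b = 0}"
    using assms by auto
  then have "zero_rows (W - {r}) b < zero_rows W b"
    unfolding zero_rows_def using assms(1,5) by (simp add: psubset_card_mono)
  then show ?thesis using deg_mono[of "W - {r}" W b] assms(1) unfolding excess_def by auto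
qed

lemma n_private_pos:
  assumes "finite W" "has_private_column W i"
  shows "1 \<le> n_private W"
proof -
  have "{i \<in> W. has_private_column W i} \<noteq> {}" using assms(2) by (auto simp: has_private_column_def)
  then show ?thesis unfolding n_private_def using assms(1) by (simp add: Suc_le_eq card_gt_0_iff)
qed

lemma n_private_ge_2:
  assumes "finite W" "has_private_column W u" "has_private_column W v" "u \<noteq> v"
  shows "2 \<le> n_private W"
proof -
  have "{u, v} \<subseteq> {i \<in> W. has_private_column W i}"
    using assms by (auto simp: has_private_column_def)
  then have "card {u, v} \<le> n_private W" unfolding n_private_def using assms(1) by (intro card_mono) auto
  then show ?thesis using assms(4) by simp
qed

lemma n_private_remove: "finite W \<Longrightarrow> n_private W \<le> n_private (W - {r}) + 1"
proof -
  assume fin: "finite W"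
  let ?S = "{i \<in> W - {r}. has_private_column (W - {r}) i}"
  have "has_private_column (W - {r}) i" if i: "has_private_column W i" "i \<noteq> r" for i
  proof -
    obtain b where b: "i \<in> W" "coef i b \<noteq> 0" "deg W b = 1"
      using i(1) by (auto simp: has_private_column_def)
    have "deg (W - {r}) b \<le> 1" using deg_mono[of "W - {r}" W b] fin b by auto
    moreover have "1 \<le> deg (W - {r}) b" using deg_pos[of "W - {r}" i b] fin b i(2) by auto
    ultimately show ?thesis using b i(2) by (auto simp: has_private_column_def)
  qed
  then have "{i \<in> W. has_private_column W i} \<subseteq> insert r ?S"
    by (auto simp: has_private_column_def)
  then have "n_private W \<le> card (insert r ?S)"
    unfolding n_private_def using fin by (intro card_mono) auto
  also have "\<dots> \<le> card ?S + 1" using fin by (simp add: card_insert_if)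
  finally show ?thesis unfolding n_private_def .
qed

lemma deg_two_partner:
  assumes "finite W" "r \<in> W" "coef r b \<noteq> 0" "deg W b = 2"
  obtains u where "u \<in> W" "u \<noteq> r" "coef u b \<noteq> 0" "has_private_column (W - {r}) u"
    "\<And>i. i \<in> W \<Longrightarrow> coef i b \<noteq> 0 \<Longrightarrow> i = r \<or> i = u"
proof -
  have d: "deg (W - {r}) b = 1" using deg_remove[OF assms(1-3)] assms(4) by simp
  then obtain u where u: "{i \<in> W - {r}. coef i b \<noteq> 0} = {u}"
    unfolding deg_def by (rule card_1_singletonE)
  then have "u \<in> W" "u \<noteq> r" "coef u b \<noteq> 0" by auto
  moreover have "has_private_column (W - {r}) u" using u d by (auto simp: has_private_column_def)
  moreover have "\<And>i. i \<in> W \<Longrightarrow> coef i b \<noteq> 0 \<Longrightarrow> i = r \<or> i = u" using u by auto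
  ultimately show ?thesis by (rule that)
qed

lemma deg_ge_2_if_no_private:
  assumes "finite W" "n_private W = 0" "r \<in> W" "coef r b \<noteq> 0"
  shows "2 \<le> deg W b"
proof -
  have "deg W b \<noteq> 1"
  proof
    assume "deg W b = 1"
    then have "has_private_column W r" using assms(3,4) unfolding has_private_column_def by blast
    then show False using n_private_pos[OF assms(1)] assms(2) by simp
  qed
  then show ?thesis using deg_pos[OF assms(1,3,4)] by linarith
qed

lemma total_excess_remove_without_private:
  assumes uncancelled: "\<And>i. i < L \<Longrightarrow> \<exists>b. 0 < occ i b \<and> \<not> self_cancelling b"
    and W: "W \<subseteq> {..<L}" "r \<in> W" and stuck: "n_private W = 0"
  shows "total_excess (W - {r}) + 1 \<le> total_excess W + n_private (W - {r})"
proof -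
  have fin: "finite W" using W(1) finite_subset by blast
  have rL: "r < L" using W by auto
  have drop: "total_excess (W - {r}) + 1 \<le> total_excess W"
    if "b \<in> K" "excess (W - {r}) b < excess W b" for b
  proof -
    have "total_excess (W - {r}) + card {b} \<le> total_excess W"
      by (rule total_excess_drop) (use that fin in auto)
    then show ?thesis by simp
  qed
  show ?thesis
  proof (cases "\<forall>b. coef r b = 0")
    case True
    obtain b where b: "0 < occ r b" "\<not> self_cancelling b" using uncancelled[OF rL] by blast
    have "excess (W - {r}) b < excess W b"
      using excess_remove_less_zero_row[OF fin W(2) b(1) _ b(2)] True by blast
    then show ?thesis using drop[OF occ_in_K[OF rL b(1)]] by linarith
  next
    case False
    then obtain b where b: "coef r b \<noteq> 0" by blast
    consider "deg W b = 2" | "3 \<le> deg W b"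
      using deg_ge_2_if_no_private[OF fin stuck W(2) b] by linarith
    then show ?thesis
    proof cases
      case 1
      then obtain u where "has_private_column (W - {r}) u" using deg_two_partner[OF fin W(2) b] by blast
      then have "1 \<le> n_private (W - {r})" using n_private_pos[of "W - {r}" u] fin by simp
      moreover have "total_excess (W - {r}) \<le> total_excess W" using total_excess_mono[OF _ fin] by blast
      ultimately show ?thesis by linarith
    next
      case 2
      then show ?thesis
        using drop[OF coef_nonzero_imp_in_K[OF rL b] excess_remove_less_deg[OF fin W(2) b]] by linarith
    qed
  qed
qed

lemma peeling:
  assumes uncancelled: "\<And>i. i < L \<Longrightarrow> \<exists>b. 0 < occ i b \<and> \<not> self_cancelling b"
  shows "W \<subseteq> {..<L} \<Longrightarrow> \<exists>piv. triangular coef piv \<and> fst ` set piv \<subseteq> W \<and>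
           card W + n_private W \<le> total_excess W + 2 * length piv"
proof (induction "card W" arbitrary: W rule: less_induct)
  case less
  have fin: "finite W" using less.prems finite_subset by blast
  show ?case
  proof (cases "W = {}")
    case True
    then show ?thesis by (intro exI[of _ "[]"]) (simp add: n_private_def)
  next
    case False
    show ?thesis
    proof (cases "\<exists>r. has_private_column W r")
      case True
      then obtain r b where r: "r \<in> W" "coef r b \<noteq> 0" "deg W b = 1"
        by (auto simp: has_private_column_def)
      obtain piv where piv: "triangular coef piv" "fst ` set piv \<subseteq> W - {r}"
        "card (W - {r}) + n_private (W - {r}) \<le> total_excess (W - {r}) + 2 * length piv"
        using less.hyps[of "W - {r}"] less.prems card_Diff1_less[OF fin r(1)] by blast
      have "coef (fst q) b = 0" if "q \<in> set piv" for q
        using deg_one_unique[OF r(3) r(1,2)] piv(2) that by blast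
      then have "triangular coef ((r, b) # piv)" using piv(1) r(2) by simp
      moreover have "card W + n_private W \<le> total_excess W + 2 * length ((r, b) # piv)"
        using piv(3) card_Suc_Diff1[OF fin r(1)] n_private_remove[OF fin, of r]
          total_excess_mono[of "W - {r}" W] fin by auto
      ultimately show ?thesis using piv(2) r(1) by (intro exI[of _ "(r, b) # piv"]) auto
    next
      case stuck: False
      from False obtain r where r: "r \<in> W" by auto
      obtain piv where piv: "triangular coef piv" "fst ` set piv \<subseteq> W - {r}"
        "card (W - {r}) + n_private (W - {r}) \<le> total_excess (W - {r}) + 2 * length piv"
        using less.hyps[of "W - {r}"] less.prems card_Diff1_less[OF fin r] by blast
      have "n_private W = 0" using stuck by (simp add: n_private_def)
      then have "total_excess (W - {r}) + 1 \<le> total_excess W + n_private (W - {r})"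
        using total_excess_remove_without_private[OF uncancelled less.prems r] by blast
      then show ?thesis
        using piv card_Suc_Diff1[OF fin r] \<open>n_private W = 0\<close> by (intro exI[of _ piv]) auto
    qed
  qed
qed

lemma occurrences_lower_bound:
  "deg {..<L} b + (\<Sum>i\<in>{i \<in> {..<L}. coef i b \<noteq> 0}. occ i b - 1)
     + 2 * card {i \<in> {..<L}. 0 < occ i b \<and> coef i b = 0} \<le> occurrences b"
proof -
  let ?D = "{i \<in> {..<L}. coef i b \<noteq> 0}" and ?Z = "{i \<in> {..<L}. 0 < occ i b \<and> coef i b = 0}"
  have "(\<Sum>i\<in>?D. occ i b) = (\<Sum>i\<in>?D. 1 + (occ i b - 1))"
    by (intro sum.cong) (auto dest: coef_nonzero_imp_occ)
  also have "\<dots> = (\<Sum>i\<in>?D. 1) + (\<Sum>i\<in>?D. occ i b - 1)" by (rule sum.distrib)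
  finally have "(\<Sum>i\<in>?D. occ i b) = card ?D + (\<Sum>i\<in>?D. occ i b - 1)" by simp
  moreover have "2 * card ?Z \<le> (\<Sum>i\<in>?Z. occ i b)"
    using sum_mono[of ?Z "\<lambda>_. 2" "\<lambda>i. occ i b"] zero_coef_occ_ge_2 by auto
  moreover have "(\<Sum>i\<in>?D. occ i b) + (\<Sum>i\<in>?Z. occ i b) = (\<Sum>i\<in>?D \<union> ?Z. occ i b)"
    by (rule sum.union_disjoint[symmetric]) auto
  moreover have "(\<Sum>i\<in>?D \<union> ?Z. occ i b) \<le> occurrences b"
    unfolding occurrences_def by (rule sum_mono2) auto
  ultimately show ?thesis unfolding deg_def by linarith
qed

lemma excess_le_occurrences:
  assumes "2 \<le> occurrences b"
  shows "2 + excess {..<L} b \<le> occurrences b"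
proof (cases "self_cancelling b")
  case True
  then have "deg {..<L} b = 0" unfolding deg_def using self_cancelling_coef by auto
  then show ?thesis using True by (simp add: excess_def zero_rows_def self_cancelling_def)
next
  case False
  let ?d = "deg {..<L} b" and ?z = "card {i \<in> {..<L}. 0 < occ i b \<and> coef i b = 0}"
  have "?d + 2 * ?z \<le> occurrences b" using occurrences_lower_bound[of b] by linarith
  moreover have "excess {..<L} b = (?d - 2) + ?z" by (simp add: excess_def zero_rows_def False)
  moreover have "occurrences b \<noteq> 2" if "?z = 1"
  proof
    assume "occurrences b = 2"
    from \<open>?z = 1\<close> obtain i where i: "i < L" "0 < occ i b" "coef i b = 0"
      by (auto simp: card_Suc_eq)
    then have "occ i b = 2"
      using zero_coef_occ_ge_2[OF i] occ_le_occurrences[OF i(1), of b] \<open>occurrences b = 2\<close> by linarith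
    then show False using False i \<open>occurrences b = 2\<close> by (auto simp: self_cancelling_def)
  qed
  ultimately show ?thesis using assms by linarith
qed

lemma sum_two_plus_excess: "(\<Sum>b\<in>K. 2 + excess W b) = 2 * card K + total_excess W"
proof -
  have "(\<Sum>b\<in>K. 2 + excess W b) = (\<Sum>b\<in>K. 2) + total_excess W"
    unfolding total_excess_def by (rule sum.distrib)
  then show ?thesis by (simp add: mult.commute)
qed

lemma total_excess_le:
  assumes "\<And>b. b \<in> K \<Longrightarrow> 2 \<le> occurrences b"
  shows "2 * card K + total_excess {..<L} \<le> total_occurrences"
proof -
  have "2 * card K + total_excess {..<L} = (\<Sum>b\<in>K. 2 + excess {..<L} b)"
    by (rule sum_two_plus_excess[symmetric])
  also have "\<dots> \<le> total_occurrences" unfolding total_occurrences_def by (intro sum_mono excess_le_occurrences assms)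
  finally show ?thesis .
qed

lemma occurrences_eq_if_tight:
  assumes "\<And>b. b \<in> K \<Longrightarrow> 2 \<le> occurrences b" "total_occurrences = 2 * card K + total_excess {..<L}" "b \<in> K"
  shows "occurrences b = 2 + excess {..<L} b"
proof (rule ccontr)
  assume "occurrences b \<noteq> 2 + excess {..<L} b"
  then have "2 + excess {..<L} b < occurrences b" using excess_le_occurrences[OF assms(1)[OF assms(3)]] by simp
  then have "(\<Sum>b\<in>K. 2 + excess {..<L} b) < (\<Sum>b\<in>K. occurrences b)"
    using excess_le_occurrences assms(1,3) by (intro sum_strict_mono_ex1[OF finite_K]) auto
  then have "2 * card K + total_excess {..<L} < total_occurrences"
    by (simp only: sum_two_plus_excess total_occurrences_def)
  then show False using assms(2) by simp
qed

definition excess_loss :: "nat \<Rightarrow> nat" where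
  "excess_loss r = total_excess {..<L} - total_excess ({..<L} - {r})"

definition closed_pair :: "nat \<Rightarrow> nat \<Rightarrow> bool" where
  "closed_pair r u \<longleftrightarrow> (\<forall>a b i. a \<in> {r, u} \<longrightarrow> 0 < occ a b \<longrightarrow> \<not> self_cancelling b \<longrightarrow>
     i < L \<longrightarrow> 0 < occ i b \<longrightarrow> i \<in> {r, u})"

lemma excess_loss_ge:
  assumes "D \<subseteq> K" "\<And>b. b \<in> D \<Longrightarrow> excess ({..<L} - {r}) b < excess {..<L} b"
  shows "card D \<le> excess_loss r"
  using total_excess_drop[of "{..<L} - {r}" "{..<L}" D] assms unfolding excess_loss_def by auto

lemma closed_pair_adjacent:
  assumes "closed_pair r u"
  shows "adjacent `` {r, u} \<subseteq> {r, u}"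
proof
  fix j assume "j \<in> adjacent `` {r, u}"
  then obtain i b where i: "i \<in> {r, u}" "i < L" "j < L" "0 < occ i b" "0 < occ j b"
    by (auto simp: adjacent_def)
  show "j \<in> {r, u}"
  proof (cases "self_cancelling b")
    case True
    then show ?thesis using self_cancelling_single_row[OF True i(2-5)] i(1) by simp
  next
    case False
    then show ?thesis using assms[unfolded closed_pair_def, rule_format, OF i(1,4) False i(3,5)] by simp
  qed
qed

lemma closed_set_contains_all_rows:
  assumes connected: "\<And>a x. a < L \<Longrightarrow> x < L \<Longrightarrow> (a, x) \<in> adjacent\<^sup>*"
    and "adjacent `` S \<subseteq> S" "a \<in> S" "a < L" "x < L"
  shows "x \<in> S"
proof -
  have "x \<in> adjacent\<^sup>* `` S" by (rule ImageI[OF connected[OF assms(4,5)] assms(3)])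
  then show ?thesis unfolding Image_closed_trancl[OF assms(2)] .
qed

lemma uncancelled_column_if_connected:
  assumes connected: "\<And>a x. a < L \<Longrightarrow> x < L \<Longrightarrow> (a, x) \<in> adjacent\<^sup>*"
    and "2 \<le> L" "i < L"
  shows "\<exists>b. 0 < occ i b \<and> \<not> self_cancelling b"
proof (rule ccontr)
  assume none: "\<not> ?thesis"
  have "adjacent `` {i} \<subseteq> {i}"
  proof
    fix j assume "j \<in> adjacent `` {i}"
    then obtain b where b: "j < L" "0 < occ i b" "0 < occ j b" by (auto simp: adjacent_def)
    then have "self_cancelling b" using none by blast
    then show "j \<in> {i}" using self_cancelling_single_row[OF _ assms(3) b(1) b(2,3)] by simp
  qed
  moreover define x where "x = (if i = 0 then 1 else 0 :: nat)"
  then have "x < L" "x \<noteq> i" using assms(2) by auto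
  ultimately show False using closed_set_contains_all_rows[OF connected, of "{i}" i x] assms(3) by simp
qed

text \<open>The extremal case: no private column, no slack in \<open>excess_le_occurrences\<close>, and no
  deletion of a single row gains two units. It forces each row into a pair of rows that no
  column leaves, which contradicts connectivity once \<open>L \<ge> 3\<close>.\<close>

context
  assumes stuck: "n_private {..<L} = 0"
    and tight: "\<And>b. b \<in> K \<Longrightarrow> occurrences b = 2 + excess {..<L} b"
    and uncancelled: "\<And>i. i < L \<Longrightarrow> \<exists>b. 0 < occ i b \<and> \<not> self_cancelling b"
    and nondegenerate: "\<And>i b. i < L \<Longrightarrow> \<bar>coef i b\<bar> = 1 \<Longrightarrow> \<exists>b'. b' \<noteq> b \<and> coef i b' \<noteq> 0"
    and small_gain: "\<And>r. r < L \<Longrightarrow> n_private ({..<L} - {r}) + excess_loss r \<le> 1"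
begin

lemma tight_nonzero_column:
  assumes "\<not> self_cancelling b" "j < L" "coef j b \<noteq> 0" "i < L" "0 < occ i b"
  shows "coef i b \<noteq> 0 \<and> occ i b = 1"
proof -
  let ?D = "{i \<in> {..<L}. coef i b \<noteq> 0}" and ?Z = "{i \<in> {..<L}. 0 < occ i b \<and> coef i b = 0}"
  have d2: "2 \<le> deg {..<L} b" using deg_ge_2_if_no_private[of "{..<L}" j b] stuck assms(2,3) by simp
  have "occurrences b = 2 + ((deg {..<L} b - 2) + card ?Z)"
    using tight[OF coef_nonzero_imp_in_K[OF assms(2,3)]] assms(1)
    by (simp add: excess_def zero_rows_def)
  then have "card ?Z = 0" and sum0: "(\<Sum>i\<in>?D. occ i b - 1) = 0"
    using occurrences_lower_bound[of b] d2 by linarith+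
  then have "coef i b \<noteq> 0" using assms(4,5) by auto
  moreover have "occ i b - 1 = 0" using sum0 calculation assms(4) by (simp add: sum_eq_0_iff)
  ultimately show ?thesis using assms(5) by simp
qed

lemma tight_zero_column:
  assumes "b \<in> K" "\<not> self_cancelling b" "\<forall>i<L. coef i b = 0"
  shows "card {i. i < L \<and> 0 < occ i b} = 2"
proof -
  let ?Y = "{i. i < L \<and> 0 < occ i b}"
  have occ_sum: "occurrences b = (\<Sum>i\<in>?Y. occ i b)"
    unfolding occurrences_def by (rule sum.mono_neutral_right) auto
  have "{i \<in> {..<L}. 0 < occ i b \<and> coef i b = 0} = ?Y" using assms(3) by auto
  moreover have "deg {..<L} b = 0" using assms(3) by (simp add: deg_def)
  ultimately have occ_Y: "occurrences b = 2 + card ?Y"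
    using tight[OF assms(1)] assms(2) by (simp add: excess_def zero_rows_def)
  have "2 * card ?Y \<le> (\<Sum>i\<in>?Y. occ i b)"
    using sum_mono[of ?Y "\<lambda>_. 2" "\<lambda>i. occ i b"] zero_coef_occ_ge_2 assms(3) by auto
  then have "card ?Y \<le> 2" using occ_sum occ_Y by linarith
  moreover have "card ?Y \<noteq> 1"
  proof
    assume "card ?Y = 1"
    then obtain i where "?Y = {i}" by (rule card_1_singletonE)
    then have "occurrences b = occ i b" "i < L" using occ_sum by auto
    then show False using \<open>card ?Y = 1\<close> occ_Y even_occ_minus_coef[of i b] assms(3) by simp
  qed
  moreover have "card ?Y \<noteq> 0"
  proof
    assume "card ?Y = 0"
    then have "?Y = {}" by simp
    then show False using occ_sum occ_Y by simp
  qed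
  ultimately show ?thesis by linarith
qed

text \<open>Deleting \<open>u\<close> costs one unit already at \<open>h\<close>; a second nonzero column would cost
  another unit or, having degree two, create a private column.\<close>

lemma coef_zero_off_dropping_column:
  assumes "u < L" "h \<in> K" "excess ({..<L} - {u}) h < excess {..<L} h" "b \<noteq> h"
  shows "coef u b = 0"
proof (rule ccontr)
  assume b: "coef u b \<noteq> 0"
  let ?R = "{..<L} - {u}"
  have loss_h: "card {h} \<le> excess_loss u" using excess_loss_ge[of "{h}" u] assms(2,3) by auto
  have "2 \<le> deg {..<L} b" using deg_ge_2_if_no_private[of "{..<L}" u b] stuck assms(1) b by simp
  then consider "deg {..<L} b = 2" | "3 \<le> deg {..<L} b" by linarith
  then show False
  proof cases
    case 1
    then obtain w where "has_private_column ?R w"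
      using deg_two_partner[of "{..<L}" u b] assms(1) b by blast
    then have "1 \<le> n_private ?R" using n_private_pos[of ?R w] by simp
    then show False using small_gain[OF assms(1)] loss_h by simp
  next
    case 2
    then have "excess ?R b < excess {..<L} b" using excess_remove_less_deg[of "{..<L}" u b] assms(1) b by simp
    then have "card {b, h} \<le> excess_loss u"
      using excess_loss_ge[of "{b, h}" u] assms(2,3) coef_nonzero_imp_in_K[OF assms(1) b] by auto
    then show False using small_gain[OF assms(1)] assms(4) by simp
  qed
qed

lemma zero_coef_column_forces_zero_row:
  assumes "u < L" "0 < occ u h" "coef u h = 0" "\<not> self_cancelling h"
  shows "coef u b = 0"
proof (cases "b = h")
  case False
  have "excess ({..<L} - {u}) h < excess {..<L} h"
    using excess_remove_less_zero_row[of "{..<L}" u h] assms by simp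
  then show ?thesis using coef_zero_off_dropping_column[OF assms(1) occ_in_K[OF assms(1,2)] _ False] by blast
qed (use assms(3) in simp)

lemma nonzero_coef_deg_two:
  assumes "r < L" "coef r b \<noteq> 0"
  shows "deg {..<L} b = 2"
proof (rule ccontr)
  assume "deg {..<L} b \<noteq> 2"
  then have "excess ({..<L} - {r}) b < excess {..<L} b"
    using excess_remove_less_deg[of "{..<L}" r b] deg_ge_2_if_no_private[of "{..<L}" r b] stuck assms
    by simp
  moreover have "\<not> self_cancelling b" using self_cancelling_coef assms by blast
  then have "occ r b = 1"
    using tight_nonzero_column[OF _ assms assms(1) coef_nonzero_imp_occ[OF assms]] by simp
  then have "\<bar>coef r b\<bar> = 1" using abs_coef_le_occ[OF assms(1), of b] assms(2) by linarith
  then obtain b' where "b' \<noteq> b" "coef r b' \<noteq> 0" using nondegenerate[OF assms(1)] by blast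
  ultimately show False
    using coef_zero_off_dropping_column[OF assms(1) coef_nonzero_imp_in_K[OF assms]] by blast
qed

lemma zero_row_partner:
  assumes "r < L" "\<forall>b. coef r b = 0"
  obtains u where "u < L" "u \<noteq> r" "closed_pair r u"
proof -
  obtain h where h: "0 < occ r h" "\<not> self_cancelling h" using uncancelled[OF assms(1)] by blast
  have h0: "\<forall>i<L. coef i h = 0"
    using tight_nonzero_column[OF h(2) _ _ assms(1) h(1)] assms(2) by blast
  have "card {i. i < L \<and> 0 < occ i h} = 2"
    by (rule tight_zero_column[OF occ_in_K[OF assms(1) h(1)] h(2) h0])
  then obtain x y where xy: "{i. i < L \<and> 0 < occ i h} = {x, y}" "x \<noteq> y" by (meson card_2_iff)
  have "r \<in> {x, y}" using xy(1) assms(1) h(1) by blast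
  then obtain u where rows_h: "{i. i < L \<and> 0 < occ i h} = {r, u}" "u \<noteq> r"
    using xy by (metis insert_commute insertE singletonD)
  have u: "u < L" "0 < occ u h" using rows_h(1) by blast+
  have "\<forall>c. coef u c = 0" using zero_coef_column_forces_zero_row[OF u _ h(2)] h0 u(1) by blast
  then have zero_rows_rh: "a < L \<and> 0 < occ a h \<and> (\<forall>c. coef a c = 0)" if "a \<in> {r, u}" for a
    using that assms u h(1) by auto
  have only_h: "b = h" if "a \<in> {r, u}" "0 < occ a b" "\<not> self_cancelling b" for a b
  proof (rule ccontr)
    assume "b \<noteq> h"
    have a: "a < L" "0 < occ a h" "\<forall>c. coef a c = 0" using zero_rows_rh[OF that(1)] by auto
    have "card {b, h} \<le> excess_loss a"
      by (rule excess_loss_ge)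
        (use a that h(2) occ_in_K[OF a(1)] excess_remove_less_zero_row[of "{..<L}" a] in auto)
    then show False using small_gain[OF a(1)] \<open>b \<noteq> h\<close> by simp
  qed
  have "closed_pair r u" unfolding closed_pair_def
  proof (intro allI impI)
    fix a b i assume "a \<in> {r, u}" "0 < occ a b" "\<not> self_cancelling b" "i < L" "0 < occ i b"
    then show "i \<in> {r, u}" using only_h rows_h(1) by blast
  qed
  then show ?thesis using that u(1) rows_h(2) by blast
qed

lemma nonzero_row_partner:
  assumes "r < L" "coef r b0 \<noteq> 0"
  obtains u where "u < L" "u \<noteq> r" "coef u b0 \<noteq> 0"
    "\<And>b i. 0 < occ r b \<Longrightarrow> \<not> self_cancelling b \<Longrightarrow> i < L \<Longrightarrow> 0 < occ i b \<Longrightarrow> i = r \<or> i = u"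
proof -
  let ?R = "{..<L} - {r}"
  have rR: "r \<in> {..<L}" using assms(1) by simp
  obtain u where u: "u \<in> {..<L}" "u \<noteq> r" "coef u b0 \<noteq> 0" "has_private_column ?R u"
    using deg_two_partner[OF finite_lessThan rR assms(2) nonzero_coef_deg_two[OF assms]] by blast
  have "i = r \<or> i = u" if b: "0 < occ r b" "\<not> self_cancelling b" and i: "i < L" "0 < occ i b" for b i
  proof -
    have cb: "coef r b \<noteq> 0"
      using zero_coef_column_forces_zero_row[OF assms(1) b(1) _ b(2)] assms(2) by blast
    obtain u' where u': "has_private_column ?R u'" "\<And>i. i \<in> {..<L} \<Longrightarrow> coef i b \<noteq> 0 \<Longrightarrow> i = r \<or> i = u'"
      using deg_two_partner[OF finite_lessThan rR cb nonzero_coef_deg_two[OF assms(1) cb]] by blast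
    have "u' = u"
    proof (rule ccontr)
      assume "u' \<noteq> u"
      then have "2 \<le> n_private ?R" using n_private_ge_2[OF _ u'(1) u(4)] by simp
      then show False using small_gain[OF assms(1)] by simp
    qed
    moreover have "coef i b \<noteq> 0" using tight_nonzero_column[OF b(2) assms(1) cb i] by simp
    ultimately show ?thesis using u'(2) i(1) by simp
  qed
  then show ?thesis using that u(1-3) by simp
qed

lemma closed_pair_exists:
  assumes "r < L"
  obtains u where "u < L" "u \<noteq> r" "closed_pair r u"
proof (cases "\<forall>b. coef r b = 0")
  case True
  then show ?thesis using zero_row_partner[OF assms] that by blast
next
  case False
  then obtain b0 where b0: "coef r b0 \<noteq> 0" by blast
  obtain u where u: "u < L" "u \<noteq> r" "coef u b0 \<noteq> 0"
    and close_r: "\<And>b i. 0 < occ r b \<Longrightarrow> \<not> self_cancelling b \<Longrightarrow> i < L \<Longrightarrow> 0 < occ i b \<Longrightarrow> i = r \<or> i = u"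
    using nonzero_row_partner[OF assms b0] by blast
  obtain v where v: "v < L" "v \<noteq> u" "coef v b0 \<noteq> 0"
    and close_u: "\<And>b i. 0 < occ u b \<Longrightarrow> \<not> self_cancelling b \<Longrightarrow> i < L \<Longrightarrow> 0 < occ i b \<Longrightarrow> i = u \<or> i = v"
    using nonzero_row_partner[OF u(1,3)] by blast
  have "\<not> self_cancelling b0" using self_cancelling_coef assms b0 by blast
  then have "v = r"
    using close_r[OF coef_nonzero_imp_occ[OF assms b0] _ v(1) coef_nonzero_imp_occ[OF v(1,3)]] v(2) by blast
  have "closed_pair r u" unfolding closed_pair_def
  proof (intro allI impI)
    fix a b i assume "a \<in> {r, u}" "0 < occ a b" "\<not> self_cancelling b" "i < L" "0 < occ i b"
    then show "i \<in> {r, u}" using close_r close_u \<open>v = r\<close> by blast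
  qed
  then show ?thesis using that u by blast
qed

end

lemma exists_large_gain:
  assumes connected: "\<And>a x. a < L \<Longrightarrow> x < L \<Longrightarrow> (a, x) \<in> adjacent\<^sup>*"
    and "3 \<le> L" and stuck: "n_private {..<L} = 0"
    and tight: "\<And>b. b \<in> K \<Longrightarrow> occurrences b = 2 + excess {..<L} b"
    and nondegenerate: "\<And>i b. i < L \<Longrightarrow> \<bar>coef i b\<bar> = 1 \<Longrightarrow> \<exists>b'. b' \<noteq> b \<and> coef i b' \<noteq> 0"
  shows "\<exists>r<L. 2 \<le> n_private ({..<L} - {r}) + excess_loss r"
proof (rule ccontr)
  assume none: "\<not> ?thesis"
  have small: "n_private ({..<L} - {r}) + excess_loss r \<le> 1" if "r < L" for r
  proof -
    have "\<not> 2 \<le> n_private ({..<L} - {r}) + excess_loss r" using none that by blast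
    then show ?thesis by linarith
  qed
  have uncancelled: "\<And>i. i < L \<Longrightarrow> \<exists>b. 0 < occ i b \<and> \<not> self_cancelling b"
    using uncancelled_column_if_connected[OF connected] assms(2) by simp
  have "0 < L" using assms(2) by simp
  obtain u where u: "u < L" "u \<noteq> 0" "closed_pair 0 u"
    by (rule closed_pair_exists[OF stuck tight uncancelled nondegenerate small \<open>0 < L\<close>])
  define x where "x = (if u = 1 then 2 else 1 :: nat)"
  have "x < L" "x \<notin> {0, u}" using assms(2) by (auto simp: x_def)
  then show False
    using closed_set_contains_all_rows[OF connected closed_pair_adjacent[OF u(3)], of 0 x] \<open>0 < L\<close>
    by simp
qed

lemma exists_good_first_deletion:
  assumes connected: "\<And>a x. a < L \<Longrightarrow> x < L \<Longrightarrow> (a, x) \<in> adjacent\<^sup>*"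
    and "3 \<le> L" and stuck: "n_private {..<L} = 0"
    and occurrences_ge_2: "\<And>b. b \<in> K \<Longrightarrow> 2 \<le> occurrences b"
    and nondegenerate: "\<And>i b. i < L \<Longrightarrow> \<bar>coef i b\<bar> = 1 \<Longrightarrow> \<exists>b'. b' \<noteq> b \<and> coef i b' \<noteq> 0"
  obtains r where "r < L" "2 \<le> n_private ({..<L} - {r}) + excess_loss r
    + (total_occurrences - (2 * card K + total_excess {..<L}))"
proof (cases "total_occurrences = 2 * card K + total_excess {..<L}")
  case True
  then have "\<And>b. b \<in> K \<Longrightarrow> occurrences b = 2 + excess {..<L} b"
    using occurrences_eq_if_tight[OF occurrences_ge_2] by simp
  then obtain r where "r < L" "2 \<le> n_private ({..<L} - {r}) + excess_loss r"
    using exists_large_gain[OF connected assms(2) stuck _ nondegenerate] by blast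
  then show ?thesis using that by simp
next
  case False
  have "\<And>i. i < L \<Longrightarrow> \<exists>b. 0 < occ i b \<and> \<not> self_cancelling b"
    using uncancelled_column_if_connected[OF connected] assms(2) by simp
  then have "total_excess ({..<L} - {0}) + 1 \<le> total_excess {..<L} + n_private ({..<L} - {0})"
    using total_excess_remove_without_private[OF _ _ _ stuck, of 0] assms(2) by simp
  moreover have "2 * card K + total_excess {..<L} \<le> total_occurrences"
    by (rule total_excess_le[OF occurrences_ge_2])
  ultimately have "2 \<le> n_private ({..<L} - {0}) + excess_loss 0
      + (total_occurrences - (2 * card K + total_excess {..<L}))"
    using False unfolding excess_loss_def by linarith
  then show ?thesis using that[of 0] assms(2) by simp
qed

theorem exists_triangular_pivots:
  assumes connected: "\<And>a x. a < L \<Longrightarrow> x < L \<Longrightarrow> (a, x) \<in> adjacent\<^sup>*"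
    and "3 \<le> L"
    and occurrences_ge_2: "\<And>b. b \<in> K \<Longrightarrow> 2 \<le> occurrences b"
    and nondegenerate: "\<And>i b. i < L \<Longrightarrow> \<bar>coef i b\<bar> = 1 \<Longrightarrow> \<exists>b'. b' \<noteq> b \<and> coef i b' \<noteq> 0"
  obtains piv where "triangular coef piv" "fst ` set piv \<subseteq> {..<L}"
    "2 * card K + L + 1 \<le> total_occurrences + 2 * length piv"
proof -
  have uncancelled: "\<And>i. i < L \<Longrightarrow> \<exists>b. 0 < occ i b \<and> \<not> self_cancelling b"
    using uncancelled_column_if_connected[OF connected] assms(2) by simp
  have slack: "2 * card K + total_excess {..<L} \<le> total_occurrences"
    by (rule total_excess_le[OF occurrences_ge_2])
  show ?thesis
  proof (cases "n_private {..<L} = 0")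
    case False
    obtain piv where "triangular coef piv" "fst ` set piv \<subseteq> {..<L}"
      "card {..<L} + n_private {..<L} \<le> total_excess {..<L} + 2 * length piv"
      using peeling[OF uncancelled order_refl] by blast
    then show ?thesis using that slack False by simp
  next
    case True
    obtain r where r: "r < L" "2 \<le> n_private ({..<L} - {r}) + excess_loss r
      + (total_occurrences - (2 * card K + total_excess {..<L}))"
      by (rule exists_good_first_deletion[OF connected assms(2) True occurrences_ge_2 nondegenerate])
    obtain piv where piv: "triangular coef piv" "fst ` set piv \<subseteq> {..<L} - {r}"
      "card ({..<L} - {r}) + n_private ({..<L} - {r}) \<le> total_excess ({..<L} - {r}) + 2 * length piv"
      using peeling[OF uncancelled, of "{..<L} - {r}"] by blast
    have "total_excess ({..<L} - {r}) \<le> total_excess {..<L}" by (rule total_excess_mono) auto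
    then have "2 * card K + L + 1 \<le> total_occurrences + 2 * length piv"
      using piv(3) r slack unfolding excess_loss_def by (simp add: card_Diff_singleton)
    then show ?thesis using that piv(1,2) by blast
  qed
qed

lemma triangular_columns_in_K:
  assumes "triangular coef piv" "fst ` set piv \<subseteq> {..<L}"
  shows "snd ` set piv \<subseteq> K"
proof
  fix b assume "b \<in> snd ` set piv"
  then obtain q where q: "q \<in> set piv" "b = snd q" by blast
  then have "fst q < L" using assms(2) by blast
  then show "b \<in> K" using coef_nonzero_imp_in_K triangular_diag_nonzero[OF assms(1) q(1)] q(2) by blast
qed

lemma length_triangular_le_card_K:
  assumes "triangular coef piv" "fst ` set piv \<subseteq> {..<L}"
  shows "length piv \<le> card K"
proof -
  have "card (snd ` set piv) = length piv"
    using distinct_card[OF triangular_distinct_columns[OF assms(1)]] by simp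
  moreover have "card (snd ` set piv) \<le> card K"
    using triangular_columns_in_K[OF assms] finite_K by (intro card_mono)
  ultimately show ?thesis by simp
qed

lemma abs_coef_le_total_occurrences:
  assumes "i < L"
  shows "\<bar>coef i b\<bar> \<le> int total_occurrences"
proof (cases "coef i b = 0")
  case False
  have "occurrences b \<le> total_occurrences"
    unfolding total_occurrences_def using finite_K coef_nonzero_imp_in_K[OF assms False]
    by (intro member_le_sum) auto
  then show ?thesis using abs_coef_le_occ[OF assms, of b] occ_le_occurrences[OF assms, of b] by linarith
qed simp

end

section \<open>The shape of a cluster\<close>

definition signed_count :: "'a list \<Rightarrow> int list \<Rightarrow> 'a \<Rightarrow> int" where
  "signed_count xs es b = (\<Sum>(x, e) \<leftarrow> zip xs es. if x = b then e else 0)"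

lemma signed_count_Nil [simp]: "signed_count [] es b = 0"
  and signed_count_Cons [simp]:
    "signed_count (x # xs) (e # es) b = (if x = b then e else 0) + signed_count xs es b"
  by (simp_all add: signed_count_def)

lemma signed_count_nonzero_imp_mem: "signed_count xs es b \<noteq> 0 \<Longrightarrow> b \<in> set xs"
proof (induction xs arbitrary: es)
  case (Cons x xs)
  then show ?case by (cases es) (auto simp: signed_count_def split: if_splits)
qed simp

lemma signed_count_vs_count:
  assumes "length es = length xs" "set es \<subseteq> {1, -1}"
  shows "\<bar>signed_count xs es b\<bar> \<le> int (count (mset xs) b)"
    and "even (int (count (mset xs) b) - signed_count xs es b)"
proof -
  have "\<bar>signed_count xs es b\<bar> \<le> int (count (mset xs) b)
        \<and> even (int (count (mset xs) b) - signed_count xs es b)"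
    using assms
  proof (induction es xs rule: list_induct2)
    case (Cons e es x xs)
    then have "e = 1 \<or> e = -1" by auto
    with Cons show ?case by (auto simp: algebra_simps)
  qed simp
  then show "\<bar>signed_count xs es b\<bar> \<le> int (count (mset xs) b)"
    and "even (int (count (mset xs) b) - signed_count xs es b)" by auto
qed

lemma sum_signed_count:
  assumes "finite A" "set xs \<subseteq> A" "length es = length xs"
  shows "(\<Sum>t<length xs. es ! t * g (xs ! t)) = (\<Sum>a\<in>A. signed_count xs es a * g a)"
  using assms(3,2)
proof (induction es xs rule: list_induct2)
  case (Cons e es x xs)
  have "(\<Sum>a\<in>A. signed_count (x # xs) (e # es) a * g a)
        = (\<Sum>a\<in>A. if a = x then e * g a else 0) + (\<Sum>a\<in>A. signed_count xs es a * g a)"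
    by (subst sum.distrib[symmetric]) (auto intro!: sum.cong simp: distrib_right)
  also have "(\<Sum>a\<in>A. if a = x then e * g a else 0) = e * g x"
    using assms(1) Cons.prems by (simp add: sum.delta)
  finally show ?case using Cons by (simp del: sum.lessThan_Suc add: sum.lessThan_Suc_shift)
qed simp

definition distinct_values :: "(nat list \<times> int list) list \<Rightarrow> nat list" where
  "distinct_values X = remdups (concat (map fst X))"

fun index_in :: "'a list \<Rightarrow> 'a \<Rightarrow> nat" where
  "index_in [] x = 0"
| "index_in (y # ys) x = (if y = x then 0 else Suc (index_in ys x))"

lemma index_in_less: "x \<in> set ys \<Longrightarrow> index_in ys x < length ys"
  by (induction ys) auto

lemma nth_index_in: "x \<in> set ys \<Longrightarrow> ys ! index_in ys x = x"
  by (induction ys) auto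

definition pattern :: "(nat list \<times> int list) list \<Rightarrow> nat list list" where
  "pattern X = map (\<lambda>x. map (index_in (distinct_values X)) (fst x)) X"

definition shape :: "(nat list \<times> int list) list \<Rightarrow> int list list \<times> nat list list \<times> nat" where
  "shape X = (map snd X, pattern X, length (distinct_values X))"

definition pattern_occ :: "(nat list \<times> int list) list \<Rightarrow> nat \<Rightarrow> nat \<Rightarrow> nat" where
  "pattern_occ X i \<beta> = count (mset (pattern X ! i)) \<beta>"

definition pattern_coef :: "(nat list \<times> int list) list \<Rightarrow> nat \<Rightarrow> nat \<Rightarrow> int" where
  "pattern_coef X i \<beta> = signed_count (pattern X ! i) (map snd X ! i) \<beta>"

lemma set_distinct_values: "set (distinct_values X) = (\<Union>x\<in>set X. set (fst x))"
  by (simp add: distinct_values_def)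

lemma row_subset_distinct_values: "i < length X \<Longrightarrow> set (fst (X ! i)) \<subseteq> set (distinct_values X)"
  using nth_mem[of i X] unfolding set_distinct_values by blast

lemma mem_distinct_values_imp_row:
  assumes "v \<in> set (distinct_values X)"
  obtains i where "i < length X" "v \<in> set (fst (X ! i))"
proof -
  obtain x where "x \<in> set X" "v \<in> set (fst x)" using assms by (auto simp: set_distinct_values)
  then show ?thesis using that by (metis in_set_conv_nth)
qed

lemma pattern_nth: "i < length X \<Longrightarrow> pattern X ! i = map (index_in (distinct_values X)) (fst (X ! i))"
  by (simp add: pattern_def)

lemma set_pattern_nth:
  assumes "i < length X"
  shows "set (pattern X ! i) \<subseteq> {..<length (distinct_values X)}"
proof
  fix \<beta> assume "\<beta> \<in> set (pattern X ! i)"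
  then obtain v where "v \<in> set (fst (X ! i))" "\<beta> = index_in (distinct_values X) v"
    using pattern_nth[OF assms] by auto
  then show "\<beta> \<in> {..<length (distinct_values X)}"
    using index_in_less[of v "distinct_values X"] row_subset_distinct_values[OF assms] by auto
qed

lemma map_nth_pattern:
  assumes "i < length X"
  shows "map ((!) (distinct_values X)) (pattern X ! i) = fst (X ! i)"
  unfolding pattern_nth[OF assms] map_map
  by (rule map_idI) (use row_subset_distinct_values[OF assms] in \<open>auto intro: nth_index_in\<close>)

lemma length_pattern [simp]: "length (pattern X) = length X"
  by (simp add: pattern_def)

lemma shape_eq_and_values_eq_imp_eq:
  assumes "shape X = shape Y" "distinct_values X = distinct_values Y"
  shows "X = Y"
proof -
  have fst_eq: "map fst Z = map (map ((!) (distinct_values Z))) (pattern Z)" for Z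
    by (rule nth_equalityI) (simp_all add: map_nth_pattern)
  have "X = zip (map fst X) (map snd X)" by (simp only: zip_map_fst_snd)
  also have "\<dots> = zip (map fst Y) (map snd Y)"
    using assms fst_eq[of X] fst_eq[of Y] by (simp add: shape_def)
  also have "\<dots> = Y" by (simp only: zip_map_fst_snd)
  finally show ?thesis .
qed

lemma count_mset_map_inj_on:
  "inj_on f (insert b (set xs)) \<Longrightarrow> count (mset (map f xs)) (f b) = count (mset xs) b"
proof (induction xs)
  case (Cons x xs)
  have "f x = f b \<longleftrightarrow> x = b" using inj_onD[OF Cons.prems, of x b] by auto
  moreover have "inj_on f (insert b (set xs))" using Cons.prems by (rule inj_on_subset) auto
  ultimately show ?case using Cons.IH by simp
qed simp

lemma pattern_occ_eq_count:
  assumes "i < length X" "\<beta> < length (distinct_values X)"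
  shows "pattern_occ X i \<beta> = count (mset (fst (X ! i))) (distinct_values X ! \<beta>)"
proof -
  have "inj_on ((!) (distinct_values X)) (insert \<beta> (set (pattern X ! i)))"
    using set_pattern_nth[OF assms(1)] assms(2)
    by (intro inj_on_nth) (auto simp: distinct_values_def)
  then show ?thesis
    unfolding pattern_occ_def map_nth_pattern[OF assms(1), symmetric] by (rule count_mset_map_inj_on[symmetric])
qed

lemma mem_B_set_rowD:
  assumes "X \<in> B_set n P" "i < length X"
  shows "length (fst (X ! i)) = P ! i" "length (snd (X ! i)) = P ! i"
    "\<And>j. j \<in> set (fst (X ! i)) \<Longrightarrow> 1 \<le> j \<and> 2 * j \<le> n" "set (snd (X ! i)) \<subseteq> {1, -1}"
    "int n dvd (\<Sum>t<P ! i. snd (X ! i) ! t * int (fst (X ! i) ! t))"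
proof -
  have "X ! i \<in> A_set n (P ! i)" using assms unfolding B_set_def by auto
  then show "length (fst (X ! i)) = P ! i" "length (snd (X ! i)) = P ! i"
    "\<And>j. j \<in> set (fst (X ! i)) \<Longrightarrow> 1 \<le> j \<and> 2 * j \<le> n" "set (snd (X ! i)) \<subseteq> {1, -1}"
    "int n dvd (\<Sum>t<P ! i. snd (X ! i) ! t * int (fst (X ! i) ! t))"
    unfolding A_set_def by (auto simp: dvd_eq_mod_eq_0)
qed

lemma length_B_set: "X \<in> B_set n P \<Longrightarrow> length X = length P"
  by (simp add: B_set_def)

lemma row_congruence_as_pattern_sum:
  assumes "X \<in> B_set n P" "i < length X"
  shows "(\<Sum>t<P ! i. snd (X ! i) ! t * int (fst (X ! i) ! t))
           = (\<Sum>\<beta><length (distinct_values X). pattern_coef X i \<beta> * int (distinct_values X ! \<beta>))"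
proof -
  let ?vs = "distinct_values X" and ?p = "pattern X ! i"
  have len: "length ?p = P ! i" "length (snd (X ! i)) = length ?p"
    using mem_B_set_rowD(1,2)[OF assms] assms(2) by (simp_all add: pattern_nth)
  have "fst (X ! i) ! t = ?vs ! (?p ! t)" if "t < P ! i" for t
    using that len map_nth_pattern[OF assms(2)] by (metis nth_map)
  then have "(\<Sum>t<P ! i. snd (X ! i) ! t * int (fst (X ! i) ! t))
             = (\<Sum>t<length ?p. snd (X ! i) ! t * int (?vs ! (?p ! t)))"
    using len by simp
  also have "\<dots> = (\<Sum>\<beta><length ?vs. signed_count ?p (snd (X ! i)) \<beta> * int (?vs ! \<beta>))"
    by (rule sum_signed_count[OF _ set_pattern_nth[OF assms(2)] len(2)]) simp
  finally show ?thesis using assms(2) by (simp add: pattern_coef_def)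
qed

lemma signed_incidence_pattern:
  assumes "X \<in> B_set n P"
  shows "signed_incidence (length X) (pattern_occ X) (pattern_coef X) {..<length (distinct_values X)}"
proof
  fix i b assume i: "i < length X"
  show "0 < pattern_occ X i b \<Longrightarrow> b \<in> {..<length (distinct_values X)}"
    using set_pattern_nth[OF i] by (auto simp: pattern_occ_def)
  have "length (map snd X ! i) = length (pattern X ! i)" "set (map snd X ! i) \<subseteq> {1, -1}"
    using mem_B_set_rowD[OF assms i] i by (simp_all add: pattern_nth)
  then show "\<bar>pattern_coef X i b\<bar> \<le> int (pattern_occ X i b)" "even (int (pattern_occ X i b) - pattern_coef X i b)"
    unfolding pattern_coef_def pattern_occ_def by (rule signed_count_vs_count)+
qed simp

lemma pattern_connected:
  assumes "X \<in> B_set n P" "a < length X" "x < length X"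
  shows "(a, x) \<in> (signed_incidence.adjacent (length X) (pattern_occ X))\<^sup>*"
proof -
  interpret signed_incidence "length X" "pattern_occ X" "pattern_coef X" "{..<length (distinct_values X)}"
    by (rule signed_incidence_pattern[OF assms(1)])
  have shared: "(i, k) \<in> adjacent"
    if "i < length X" "k < length X" "v \<in> set (fst (X ! i))" "v \<in> set (fst (X ! k))" for i k v
  proof -
    have "index_in (distinct_values X) v \<in> set (pattern X ! i) \<inter> set (pattern X ! k)"
      using that by (simp add: pattern_nth)
    then show ?thesis using that(1,2) unfolding adjacent_def pattern_occ_def by (auto simp: count_greater_zero_iff)
  qed
  let ?E = "{(i, k). i < length (map fst X) \<and> k < length (map fst X)
              \<and> set (map fst X ! i) \<inter> set (map fst X ! k) \<noteq> {}}"
  have "?E \<subseteq> adjacent" using shared by auto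
  moreover have "is_cluster (map fst X)" using assms(1) by (simp add: B_set_def)
  then have "(a, x) \<in> ?E\<^sup>*" using assms(2,3) unfolding is_cluster_def by simp
  ultimately show ?thesis using rtrancl_mono by blast
qed

lemma pattern_occurrences_ge_2:
  assumes "X \<in> B_set n P" "\<beta> < length (distinct_values X)"
  shows "2 \<le> (\<Sum>i<length X. pattern_occ X i \<beta>)"
proof -
  let ?v = "distinct_values X ! \<beta>"
  obtain j where "j < length X" "?v \<in> set (fst (X ! j))"
    using mem_distinct_values_imp_row[OF nth_mem[OF assms(2)]] by blast
  then have "?v \<in> (\<Union>i<length P. set (fst (X ! i)))" using length_B_set[OF assms(1)] by auto
  then have "2 \<le> count (\<Sum>i<length P. mset (fst (X ! i))) ?v" using assms(1) unfolding B_set_def by blast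
  then show ?thesis using pattern_occ_eq_count[OF _ assms(2)] length_B_set[OF assms(1)]
    by (simp add: count_sum)
qed

lemma pattern_total_occurrences:
  assumes "X \<in> B_set n P"
  shows "(\<Sum>\<beta><length (distinct_values X). \<Sum>i<length X. pattern_occ X i \<beta>) = sum_list P"
proof -
  have "(\<Sum>\<beta><length (distinct_values X). \<Sum>i<length X. pattern_occ X i \<beta>)
        = (\<Sum>i<length X. \<Sum>\<beta><length (distinct_values X). count_list (pattern X ! i) \<beta>)"
    by (subst sum.swap) (simp add: pattern_occ_def count_mset)
  also have "\<dots> = (\<Sum>i<length X. length (pattern X ! i))"
    using set_pattern_nth by (intro sum.cong refl sum_count_set) auto
  also have "\<dots> = (\<Sum>i<length P. P ! i)"
    using mem_B_set_rowD(1)[OF assms] length_B_set[OF assms] by (simp add: pattern_nth)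
  finally show ?thesis by (simp add: sum_list_sum_nth atLeast0LessThan)
qed

lemma pattern_nondegenerate:
  assumes "X \<in> B_set n P" "i < length X" "\<bar>pattern_coef X i \<beta>\<bar> = 1"
  shows "\<exists>\<beta>'. \<beta>' \<noteq> \<beta> \<and> pattern_coef X i \<beta>' \<noteq> 0"
proof (rule ccontr)
  assume "\<not> ?thesis"
  then have others: "\<And>\<beta>'. \<beta>' \<noteq> \<beta> \<Longrightarrow> pattern_coef X i \<beta>' = 0" by blast
  let ?vs = "distinct_values X"
  have "\<beta> \<in> set (pattern X ! i)"
    by (rule signed_count_nonzero_imp_mem[of _ "map snd X ! i"]) (use assms(3) in \<open>auto simp: pattern_coef_def\<close>)
  then have \<beta>: "\<beta> < length ?vs" using set_pattern_nth[OF assms(2)] by auto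
  have "(\<Sum>\<beta>'<length ?vs. pattern_coef X i \<beta>' * int (?vs ! \<beta>'))
        = (\<Sum>\<beta>'<length ?vs. if \<beta>' = \<beta> then pattern_coef X i \<beta> * int (?vs ! \<beta>) else 0)"
    using others by (intro sum.cong) auto
  also have "\<dots> = pattern_coef X i \<beta> * int (?vs ! \<beta>)" using \<beta> by simp
  finally have "int n dvd pattern_coef X i \<beta> * int (?vs ! \<beta>)"
    using mem_B_set_rowD(5)[OF assms(1,2)] row_congruence_as_pattern_sum[OF assms(1,2)] by simp
  then have "n dvd ?vs ! \<beta>" using assms(3) by (auto simp: abs_if split: if_splits)
  moreover obtain j where "j < length X" "?vs ! \<beta> \<in> set (fst (X ! j))"
    using mem_distinct_values_imp_row[OF nth_mem[OF \<beta>]] by blast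
  then have "1 \<le> ?vs ! \<beta>" "2 * (?vs ! \<beta>) \<le> n" using mem_B_set_rowD(3)[OF assms(1)] by blast+
  ultimately show False by (auto dest: dvd_imp_le)
qed

section \<open>Counting clusters\<close>

lemma two_length_distinct_values_le:
  assumes "X \<in> B_set n P"
  shows "2 * length (distinct_values X) \<le> sum_list P"
proof -
  interpret signed_incidence "length X" "pattern_occ X" "pattern_coef X" "{..<length (distinct_values X)}"
    by (rule signed_incidence_pattern[OF assms])
  have "2 * card {..<length (distinct_values X)} + total_excess {..<length X} \<le> total_occurrences"
    by (rule total_excess_le) (simp add: occurrences_def pattern_occurrences_ge_2[OF assms])
  then show ?thesis using pattern_total_occurrences[OF assms] by (simp add: total_occurrences_def occurrences_def)
qed

lemma exists_pivots_for_pattern: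
  assumes "X \<in> B_set n P" "3 \<le> length P"
  obtains piv where "triangular (pattern_coef X) piv" "fst ` set piv \<subseteq> {..<length X}"
    "snd ` set piv \<subseteq> {..<length (distinct_values X)}" "length piv \<le> length (distinct_values X)"
    "\<forall>p\<in>set piv. \<bar>pattern_coef X (fst p) (snd p)\<bar> \<le> int (sum_list P)"
    "2 * length (distinct_values X) + length P + 1 \<le> sum_list P + 2 * length piv"
proof -
  interpret signed_incidence "length X" "pattern_occ X" "pattern_coef X" "{..<length (distinct_values X)}"
    by (rule signed_incidence_pattern[OF assms(1)])
  have total: "total_occurrences = sum_list P"
    using pattern_total_occurrences[OF assms(1)] by (simp add: total_occurrences_def occurrences_def)
  have L: "length X = length P" by (rule length_B_set[OF assms(1)])
  obtain piv where piv: "triangular (pattern_coef X) piv" "fst ` set piv \<subseteq> {..<length X}"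
    "2 * card {..<length (distinct_values X)} + length X + 1 \<le> total_occurrences + 2 * length piv"
  proof (rule exists_triangular_pivots)
    show "(a, x) \<in> adjacent\<^sup>*" if "a < length X" "x < length X" for a x
      using pattern_connected[OF assms(1) that] .
    show "3 \<le> length X" using assms(2) L by simp
    show "2 \<le> occurrences b" if "b \<in> {..<length (distinct_values X)}" for b
      using pattern_occurrences_ge_2[OF assms(1)] that by (simp add: occurrences_def)
    show "\<exists>b'. b' \<noteq> b \<and> pattern_coef X i b' \<noteq> 0" if "i < length X" "\<bar>pattern_coef X i b\<bar> = 1" for i b
      by (rule pattern_nondegenerate[OF assms(1) that])
  qed
  show ?thesis
  proof (rule that[OF piv(1,2)])
    show "snd ` set piv \<subseteq> {..<length (distinct_values X)}" by (rule triangular_columns_in_K[OF piv(1,2)])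
    show "length piv \<le> length (distinct_values X)"
      using length_triangular_le_card_K[OF piv(1,2)] by simp
    show "\<forall>p\<in>set piv. \<bar>pattern_coef X (fst p) (snd p)\<bar> \<le> int (sum_list P)"
      using abs_coef_le_total_occurrences piv(2) total by auto
    show "2 * length (distinct_values X) + length P + 1 \<le> sum_list P + 2 * length piv"
      using piv(3) total L by simp
  qed
qed

lemma values_in_congruence_solutions:
  assumes "X \<in> B_set n P" "R \<subseteq> {..<length X}"
  shows "restrict ((!) (distinct_values X)) {..<length (distinct_values X)}
           \<in> congruence_solutions {..<length (distinct_values X)} (pattern_coef X) R (n div 2) n"
proof -
  let ?vs = "distinct_values X"
  have "?vs ! \<beta> \<in> {1..n div 2}" if \<beta>: "\<beta> < length ?vs" for \<beta>
  proof -
    obtain j where "j < length X" "?vs ! \<beta> \<in> set (fst (X ! j))"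
      using mem_distinct_values_imp_row[OF nth_mem[OF \<beta>]] by blast
    then show ?thesis using mem_B_set_rowD(3)[OF assms(1)] by fastforce
  qed
  moreover have "int n dvd (\<Sum>\<beta><length ?vs. pattern_coef X r \<beta> * int (?vs ! \<beta>))" if "r \<in> R" for r
    using mem_B_set_rowD(5)[OF assms(1)] row_congruence_as_pattern_sum[OF assms(1)] that assms(2)
    by auto
  moreover have "(\<Sum>\<beta><length ?vs. pattern_coef X r \<beta> * int (restrict ((!) ?vs) {..<length ?vs} \<beta>))
      = (\<Sum>\<beta><length ?vs. pattern_coef X r \<beta> * int (?vs ! \<beta>))" for r
    by (intro sum.cong) auto
  ultimately show ?thesis unfolding congruence_solutions_def by (auto simp: restrict_PiE_iff)
qed

lemma card_same_shape_le_card_solutions: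
  assumes "X0 \<in> B_set n P" "R \<subseteq> {..<length X0}"
  shows "card {X \<in> B_set n P. shape X = shape X0}
    \<le> card (congruence_solutions {..<length (distinct_values X0)} (pattern_coef X0) R (n div 2) n)"
proof -
  let ?k = "length (distinct_values X0)" and ?F = "{X \<in> B_set n P. shape X = shape X0}"
  let ?vals = "\<lambda>X. restrict ((!) (distinct_values X)) {..<?k}"
  have same: "pattern_coef X = pattern_coef X0" "length (distinct_values X) = ?k" "length X = length X0"
    if "X \<in> ?F" for X
    using that by (auto simp: shape_def pattern_coef_def fun_eq_iff dest: arg_cong[of _ _ length])
  have "inj_on ?vals ?F"
  proof
    fix X Y assume XY: "X \<in> ?F" "Y \<in> ?F" "?vals X = ?vals Y"
    have "distinct_values X = distinct_values Y"
    proof (rule nth_equalityI)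
      fix \<beta> assume "\<beta> < length (distinct_values X)"
      then show "distinct_values X ! \<beta> = distinct_values Y ! \<beta>"
        using fun_cong[OF XY(3), of \<beta>] same[OF XY(1)] by simp
    qed (simp add: same[OF XY(1)] same[OF XY(2)])
    then show "X = Y" using XY(1,2) by (intro shape_eq_and_values_eq_imp_eq) simp_all
  qed
  moreover have "?vals ` ?F \<subseteq> congruence_solutions {..<?k} (pattern_coef X0) R (n div 2) n"
    using values_in_congruence_solutions[of _ n P R] assms(2) same by fastforce
  ultimately show ?thesis by (intro card_inj_on_le finite_congruence_solutions) auto
qed

lemma pivot_count_bound:
  assumes "s \<le> k" "2 * k \<le> N" "2 * k + L + 1 \<le> N + 2 * s" "0 < n"
  shows "real ((2 * N) ^ s * (n div 2) ^ (k - s))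
           \<le> real ((2 * N) ^ N) * real n powr ((real N - real L - 1) / 2)"
proof -
  have "(2 * N) ^ s * (n div 2) ^ (k - s) \<le> (2 * N) ^ N * n ^ (k - s)"
  proof (rule mult_mono)
    show "(2 * N) ^ s \<le> (2 * N) ^ N" using assms(1-3) by (intro power_increasing) auto
    show "(n div 2) ^ (k - s) \<le> n ^ (k - s)" by (rule power_mono) auto
  qed simp_all
  then have "real ((2 * N) ^ s * (n div 2) ^ (k - s)) \<le> real ((2 * N) ^ N) * real n powr real (k - s)"
    using assms(4) by (simp add: powr_realpow flip: of_nat_mult of_nat_power)
  also have "\<dots> \<le> real ((2 * N) ^ N) * real n powr ((real N - real L - 1) / 2)"
    using assms(1,3,4) by (intro mult_left_mono powr_mono) auto
  finally show ?thesis .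
qed

lemma card_same_shape_le:
  assumes X0: "X0 \<in> B_set n P" and "3 \<le> length P" "0 < n"
  shows "real (card {X \<in> B_set n P. shape X = shape X0})
           \<le> real ((2 * sum_list P) ^ sum_list P)
             * real n powr ((real (sum_list P) - real (length P) - 1) / 2)"
proof -
  let ?N = "sum_list P" and ?k = "length (distinct_values X0)"
  obtain piv where piv: "triangular (pattern_coef X0) piv" "fst ` set piv \<subseteq> {..<length X0}"
    "snd ` set piv \<subseteq> {..<?k}" "length piv \<le> ?k"
    "\<forall>p\<in>set piv. \<bar>pattern_coef X0 (fst p) (snd p)\<bar> \<le> int ?N"
    "2 * ?k + length P + 1 \<le> ?N + 2 * length piv"
    by (rule exists_pivots_for_pattern[OF X0 assms(2)])
  have "card {X \<in> B_set n P. shape X = shape X0}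
      \<le> card (congruence_solutions {..<?k} (pattern_coef X0) (fst ` set piv) (n div 2) n)"
    by (rule card_same_shape_le_card_solutions[OF X0 piv(2)])
  also have "\<dots> \<le> (2 * ?N) ^ length piv * (n div 2) ^ (?k - length piv)"
    using card_congruence_solutions_triangular[of "{..<?k}" "pattern_coef X0" piv ?N n "n div 2"]
      piv(1,3,5) assms(3) by simp
  finally show ?thesis
    using pivot_count_bound[OF piv(4) two_length_distinct_values_le[OF X0] piv(6) assms(3)]
    by (meson of_nat_le_iff order_trans)
qed

definition shapes :: "nat list \<Rightarrow> (int list list \<times> nat list list \<times> nat) set" where
  "shapes P = (\<Union>n. shape ` B_set n P)"

lemma finite_shapes: "finite (shapes P)"
proof -
  let ?N = "sum_list P" and ?L = "length P"
  let ?S = "{xs. set xs \<subseteq> {ys. set ys \<subseteq> {1, -1} \<and> length ys \<le> ?N} \<and> length xs \<le> ?L}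
    \<times> {xs. set xs \<subseteq> {ys. set ys \<subseteq> {..<?N} \<and> length ys \<le> ?N} \<and> length xs \<le> ?L} \<times> {..?N}"
  have "shape X \<in> ?S" if X: "X \<in> B_set n P" for X n
  proof -
    have k: "length (distinct_values X) \<le> ?N" using two_length_distinct_values_le[OF X] by simp
    have row: "P ! i \<le> ?N" "length (fst (X ! i)) = P ! i" "length (snd (X ! i)) = P ! i"
      "set (snd (X ! i)) \<subseteq> {1, -1}" if "i < length X" for i
      using elem_le_sum_list[of i P] mem_B_set_rowD[OF X that] length_B_set[OF X] that by auto
    have "set ys \<subseteq> {1, -1} \<and> length ys \<le> ?N" if "ys \<in> set (map snd X)" for ys
    proof -
      obtain i where "i < length X" "ys = snd (X ! i)" using \<open>ys \<in> set (map snd X)\<close>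
        by (auto simp: in_set_conv_nth)
      then show ?thesis using row by auto
    qed
    moreover have "set ys \<subseteq> {..<?N} \<and> length ys \<le> ?N" if "ys \<in> set (pattern X)" for ys
    proof -
      obtain i where i: "i < length X" "ys = pattern X ! i" using \<open>ys \<in> set (pattern X)\<close>
        by (auto simp: in_set_conv_nth)
      then show ?thesis using set_pattern_nth[OF i(1)] k row[OF i(1)] by (auto simp: pattern_nth)
    qed
    ultimately show ?thesis using k length_B_set[OF X] by (auto simp: shape_def)
  qed
  then have "shapes P \<subseteq> ?S" unfolding shapes_def by blast
  moreover have "finite ?S" by (intro finite_cartesian_product finite_lists_length_le) auto
  ultimately show ?thesis by (rule finite_subset)
qed

lemma card_B_set_le:
  assumes "3 \<le> length P" "0 < n"
  shows "real (card (B_set n P)) \<le> real (card (shapes P)) * real ((2 * sum_list P) ^ sum_list P)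
           * real n powr ((real (sum_list P) - real (length P) - 1) / 2)"
proof -
  let ?B = "B_set n P" and ?M = "real ((2 * sum_list P) ^ sum_list P)
           * real n powr ((real (sum_list P) - real (length P) - 1) / 2)"
  have sub: "shape ` ?B \<subseteq> shapes P" by (auto simp: shapes_def)
  then have fin: "finite (shape ` ?B)" using finite_shapes finite_subset by blast
  have "card ?B \<le> (\<Sum>q\<in>shape ` ?B. card {X \<in> ?B. shape X = q})"
  proof -
    have "?B = (\<Union>q\<in>shape ` ?B. {X \<in> ?B. shape X = q})" by auto
    then show ?thesis using card_UN_le[OF fin, of "\<lambda>q. {X \<in> ?B. shape X = q}"] by simp
  qed
  then have "real (card ?B) \<le> (\<Sum>q\<in>shape ` ?B. real (card {X \<in> ?B. shape X = q}))"
    by (simp flip: of_nat_sum)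
  also have "\<dots> \<le> (\<Sum>q\<in>shape ` ?B. ?M)"
    using card_same_shape_le[OF _ assms] by (intro sum_mono) auto
  also have "\<dots> \<le> real (card (shapes P)) * ?M"
    using card_mono[OF finite_shapes sub] by (simp add: mult_right_mono)
  finally show ?thesis by (simp add: mult.assoc)
qed

theorem lemma3p1:
  fixes P :: "nat list"
  assumes "length P \<ge> 3" and "\<forall>p\<in>set P. p \<ge> 1"
  shows "(\<lambda>n. real (card (B_set n P))) \<in>
           o(\<lambda>n. real n powr ((real (sum_list P) - real (length P)) / 2))"
proof -
  let ?a = "(real (sum_list P) - real (length P) - 1) / 2"
  define C where "C = real (card (shapes P)) * real ((2 * sum_list P) ^ sum_list P)"
  have "eventually (\<lambda>n. norm (real (card (B_set n P))) \<le> C * norm (real n powr ?a)) at_top"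
    using eventually_gt_at_top[of 0] by eventually_elim (use card_B_set_le[OF assms(1)] in \<open>simp add: C_def\<close>)
  then have "(\<lambda>n. real (card (B_set n P))) \<in> O(\<lambda>n. real n powr ?a)" by (rule bigoI)
  moreover have "(\<lambda>n. real n powr ?a) \<in> o(\<lambda>n. real n powr ((real (sum_list P) - real (length P)) / 2))"
    by (subst powr_smallo_iff[OF filterlim_real_sequentially]) simp_all
  ultimately show ?thesis by (rule landau_o.big_small_trans)
qed

end
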